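(* Let $\pi_1:V_1\to X_1$, $\pi_2:V_2\to X_2$ be diffeological vector pseudo-bundles and $(\tilde f,f)$ a gluing of the former to the latter. Then $\mathcal{S}_1$ is a smooth map $C^\infty_{(f,\tilde f)}(X_1,V_1)\to C^\infty(X_1^f,V_1^{\tilde f})$, for the functional diffeologies (the first with the subset diffeology inside $C^\infty(X_1,V_1)$).
   Context: Diffeological spaces, smooth maps and quotient/subset diffeologies are as usual; $C^\infty(A,B)$ carries the functional diffeology: $q:U\to C^\infty(A,B)$ is a plot iff $(u,u')\mapsto q(u)(p(u'))$ is a plot of $B$ for every plot $p:U'\to A$. A diffeological vector pseudo-bundle $\pi:V\to X$ is a smooth surjection with vector space fibres whose fibrewise addition, scalar multiplication and zero section are smooth. A gluing $(\tilde f,f)$: $f:Y\to X_2$ smooth on $Y\subseteq X_1$, $\tilde f:\pi_1^{-1}(Y)\to V_2$ smooth, $\pi_2\circ\tilde f=f\circ\pi_1$, linear on fibres. A smooth section $s$ of $V_1$ is $(f,\tilde f)$-invariant if $\tilde f(s(y))=\tilde f(s(y'))$ whenever $y,y'\in Y$, $f(y)=f(y')$; $C^\infty_{(f,\tilde f)}(X_1,V_1)$ is the set of these. $X_1^f$ is the quotient of $X_1$ identifying $y,y'\in Y$ with $f(y)=f(y')$, and $V_1^{\tilde f}$ the quotient of $V_1$ identifying $v,v'\in\pi_1^{-1}(Y)$ with $\tilde f(v)=\tilde f(v')$, with quotient diffeologies and projections $\chi_1^f,\chi_1^{\tilde f}$; $\pi_1$ induces a pseudo-bundle $V_1^{\tilde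 f}\to X_1^f$. For $s_1\in C^\infty_{(f,\tilde f)}(X_1,V_1)$, $\mathcal{S}_1(s_1)$ is the unique smooth section of $V_1^{\tilde f}$ with $\mathcal{S}_1(s_1)\circ\chi_1^f=\chi_1^{\tilde f}\circ s_1$. *)

theory Defs
  imports "HOL-Analysis.Analysis" "HOL-Library.FuncSet"
begin

text \<open>R^n is encoded as the coordinate subspace of sequences vanishing from index n on;
  on it the product topology of nat => real is the Euclidean topology.\<close>

definition Rn :: "nat \<Rightarrow> (nat \<Rightarrow> real) set" where
  "Rn n = {x. \<forall>i\<ge>n. x i = 0}"

definition domain :: "nat \<Rightarrow> (nat \<Rightarrow> real) set \<Rightarrow> bool" where
  "domain n U \<longleftrightarrow> U \<subseteq> Rn n \<and> openin (top_of_set (Rn n)) U"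

coinductive smooth_real :: "nat \<Rightarrow> (nat \<Rightarrow> real) set \<Rightarrow> ((nat \<Rightarrow> real) \<Rightarrow> real) \<Rightarrow> bool"
  for n :: nat and U :: "(nat \<Rightarrow> real) set" where
  "continuous_on U g \<Longrightarrow>
   (\<forall>i<n. \<exists>g'. smooth_real n U g' \<and>
      (\<forall>x\<in>U. ((\<lambda>t. g (x(i := x i + t))) has_real_derivative g' x) (at 0)))
   \<Longrightarrow> smooth_real n U g"

definition smooth_map :: "nat \<Rightarrow> (nat \<Rightarrow> real) set \<Rightarrow> nat \<Rightarrow> (nat \<Rightarrow> real) set
    \<Rightarrow> ((nat \<Rightarrow> real) \<Rightarrow> (nat \<Rightarrow> real)) \<Rightarrow> bool" where
  "smooth_map n U m V F \<longleftrightarrow> F ` U \<subseteq> V \<and> (\<forall>j<m. smooth_real n U (\<lambda>x. F x j))"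

type_synonym 'a plots = "nat \<Rightarrow> (nat \<Rightarrow> real) set \<Rightarrow> ((nat \<Rightarrow> real) \<Rightarrow> 'a) \<Rightarrow> bool"

text \<open>P n U p: p restricted to the domain U (open in R^n) is a plot. Plots are functions on U,
  so only the values on U matter.\<close>

definition diffeology :: "'a set \<Rightarrow> 'a plots \<Rightarrow> bool" where
  "diffeology X P \<longleftrightarrow>
     (\<forall>n U p. P n U p \<longrightarrow> domain n U \<and> p ` U \<subseteq> X) \<and>
     (\<forall>n U p q. P n U p \<and> (\<forall>u\<in>U. q u = p u) \<longrightarrow> P n U q) \<and>
     (\<forall>n U c. domain n U \<and> c \<in> X \<longrightarrow> P n U (\<lambda>_. c)) \<and>
     (\<forall>n U p. domain n U \<and> p ` U \<subseteq> X \<and>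
        (\<forall>u\<in>U. \<exists>W. u \<in> W \<and> W \<subseteq> U \<and> domain n W \<and> P n W p) \<longrightarrow> P n U p) \<and>
     (\<forall>n U p m W F. P n U p \<and> domain m W \<and> smooth_map m W n U F \<longrightarrow> P m W (p \<circ> F))"

definition smooth :: "'a set \<Rightarrow> 'a plots \<Rightarrow> 'b set \<Rightarrow> 'b plots \<Rightarrow> ('a \<Rightarrow> 'b) \<Rightarrow> bool" where
  "smooth X P Y Q g \<longleftrightarrow> g ` X \<subseteq> Y \<and> (\<forall>n U p. P n U p \<longrightarrow> Q n U (g \<circ> p))"

definition real_plots :: "real plots" where
  "real_plots n U p \<longleftrightarrow> domain n U \<and> smooth_real n U p"

definition sub_plots :: "'a plots \<Rightarrow> 'a set \<Rightarrow> 'a plots" where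
  "sub_plots P Y n U p \<longleftrightarrow> P n U p \<and> p ` U \<subseteq> Y"

definition prod_plots :: "'a plots \<Rightarrow> 'b plots \<Rightarrow> ('a \<times> 'b) plots" where
  "prod_plots P Q n U p \<longleftrightarrow> P n U (fst \<circ> p) \<and> Q n U (snd \<circ> p)"

definition quot_plots :: "'a set \<Rightarrow> 'a plots \<Rightarrow> ('a \<times> 'a) set \<Rightarrow> 'a set plots" where
  "quot_plots X P r n U p \<longleftrightarrow> domain n U \<and> p ` U \<subseteq> X // r \<and>
     (\<forall>u\<in>U. \<exists>W q. u \<in> W \<and> W \<subseteq> U \<and> domain n W \<and> P n W q \<and> (\<forall>w\<in>W. p w = r `` {q w}))"

definition smooth_maps :: "'a set \<Rightarrow> 'a plots \<Rightarrow> 'b set \<Rightarrow> 'b plots \<Rightarrow> ('a \<Rightarrow> 'b) set" where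
  "smooth_maps X P Y Q = {g. smooth X P Y Q g \<and> g \<in> extensional X}"

text \<open>R^(n+m) = R^n x R^m via the first n and the next m coordinates.\<close>

definition pr1 :: "nat \<Rightarrow> (nat \<Rightarrow> real) \<Rightarrow> (nat \<Rightarrow> real)" where
  "pr1 n z = (\<lambda>i. if i < n then z i else 0)"

definition pr2 :: "nat \<Rightarrow> (nat \<Rightarrow> real) \<Rightarrow> (nat \<Rightarrow> real)" where
  "pr2 n z = (\<lambda>j. z (n + j))"

definition prod_dom :: "nat \<Rightarrow> (nat \<Rightarrow> real) set \<Rightarrow> nat \<Rightarrow> (nat \<Rightarrow> real) set \<Rightarrow> (nat \<Rightarrow> real) set" where
  "prod_dom n U m U' = {z \<in> Rn (n + m). pr1 n z \<in> U \<and> pr2 n z \<in> U'}"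

definition fun_plots :: "'a set \<Rightarrow> 'a plots \<Rightarrow> 'b set \<Rightarrow> 'b plots \<Rightarrow> ('a \<Rightarrow> 'b) plots" where
  "fun_plots X P Y Q n U q \<longleftrightarrow> domain n U \<and> q ` U \<subseteq> smooth_maps X P Y Q \<and>
     (\<forall>m U' p. P m U' p \<longrightarrow>
        Q (n + m) (prod_dom n U m U') (\<lambda>z. q (pr1 n z) (p (pr2 n z))))"

definition fibre_vs :: "'v set \<Rightarrow> ('v \<Rightarrow> 'x) \<Rightarrow> ('v \<Rightarrow> 'v \<Rightarrow> 'v) \<Rightarrow> (real \<Rightarrow> 'v \<Rightarrow> 'v)
    \<Rightarrow> ('x \<Rightarrow> 'v) \<Rightarrow> 'x \<Rightarrow> bool" where
  "fibre_vs V \<pi> add scal zero x \<longleftrightarrow>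
    (let F = {v \<in> V. \<pi> v = x} in
     zero x \<in> F \<and>
     (\<forall>v\<in>F. \<forall>w\<in>F. add v w \<in> F) \<and>
     (\<forall>a. \<forall>v\<in>F. scal a v \<in> F) \<and>
     (\<forall>u\<in>F. \<forall>v\<in>F. \<forall>w\<in>F. add (add u v) w = add u (add v w)) \<and>
     (\<forall>v\<in>F. \<forall>w\<in>F. add v w = add w v) \<and>
     (\<forall>v\<in>F. add v (zero x) = v) \<and>
     (\<forall>v\<in>F. \<exists>w\<in>F. add v w = zero x) \<and>
     (\<forall>a. \<forall>v\<in>F. \<forall>w\<in>F. scal a (add v w) = add (scal a v) (scal a w)) \<and>
     (\<forall>a b. \<forall>v\<in>F. scal (a + b) v = add (scal a v) (scal b v)) \<and>
     (\<forall>a b. \<forall>v\<in>F. scal (a * b) v = scal a (scal b v)) \<and>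
     (\<forall>v\<in>F. scal 1 v = v))"

definition fib_prod :: "'v set \<Rightarrow> ('v \<Rightarrow> 'x) \<Rightarrow> ('v \<times> 'v) set" where
  "fib_prod V \<pi> = {(v, w). v \<in> V \<and> w \<in> V \<and> \<pi> v = \<pi> w}"

definition pseudo_bundle :: "'v set \<Rightarrow> 'v plots \<Rightarrow> 'x set \<Rightarrow> 'x plots \<Rightarrow> ('v \<Rightarrow> 'x)
    \<Rightarrow> ('v \<Rightarrow> 'v \<Rightarrow> 'v) \<Rightarrow> (real \<Rightarrow> 'v \<Rightarrow> 'v) \<Rightarrow> ('x \<Rightarrow> 'v) \<Rightarrow> bool" where
  "pseudo_bundle V DV X DX \<pi> add scal zero \<longleftrightarrow>
     diffeology V DV \<and> diffeology X DX \<and>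
     smooth V DV X DX \<pi> \<and> \<pi> ` V = X \<and>
     (\<forall>x\<in>X. fibre_vs V \<pi> add scal zero x) \<and>
     smooth (fib_prod V \<pi>) (sub_plots (prod_plots DV DV) (fib_prod V \<pi>)) V DV
        (\<lambda>(v, w). add v w) \<and>
     smooth (UNIV \<times> V) (prod_plots real_plots DV) V DV (\<lambda>(a, v). scal a v) \<and>
     smooth X DX V DV zero"

definition gluing :: "'x1 set \<Rightarrow> 'x1 plots \<Rightarrow> 'v1 set \<Rightarrow> 'v1 plots \<Rightarrow> ('v1 \<Rightarrow> 'x1)
    \<Rightarrow> ('v1 \<Rightarrow> 'v1 \<Rightarrow> 'v1) \<Rightarrow> (real \<Rightarrow> 'v1 \<Rightarrow> 'v1)
    \<Rightarrow> 'x2 set \<Rightarrow> 'x2 plots \<Rightarrow> 'v2 set \<Rightarrow> 'v2 plots \<Rightarrow> ('v2 \<Rightarrow> 'x2)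
    \<Rightarrow> ('v2 \<Rightarrow> 'v2 \<Rightarrow> 'v2) \<Rightarrow> (real \<Rightarrow> 'v2 \<Rightarrow> 'v2)
    \<Rightarrow> 'x1 set \<Rightarrow> ('x1 \<Rightarrow> 'x2) \<Rightarrow> ('v1 \<Rightarrow> 'v2) \<Rightarrow> bool" where
  "gluing X1 DX1 V1 DV1 \<pi>1 add1 smult1 X2 DX2 V2 DV2 \<pi>2 add2 smult2 Y f ft \<longleftrightarrow>
     Y \<subseteq> X1 \<and>
     smooth Y (sub_plots DX1 Y) X2 DX2 f \<and>
     smooth (V1 \<inter> \<pi>1 -` Y) (sub_plots DV1 (V1 \<inter> \<pi>1 -` Y)) V2 DV2 ft \<and>
     (\<forall>v \<in> V1 \<inter> \<pi>1 -` Y. \<pi>2 (ft v) = f (\<pi>1 v)) \<and>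
     (\<forall>v \<in> V1 \<inter> \<pi>1 -` Y. \<forall>w \<in> V1. \<pi>1 w = \<pi>1 v \<longrightarrow> ft (add1 v w) = add2 (ft v) (ft w)) \<and>
     (\<forall>a. \<forall>v \<in> V1 \<inter> \<pi>1 -` Y. ft (smult1 a v) = smult2 a (ft v))"

definition inv_sections :: "'x1 set \<Rightarrow> 'x1 plots \<Rightarrow> 'v1 set \<Rightarrow> 'v1 plots \<Rightarrow> ('v1 \<Rightarrow> 'x1)
    \<Rightarrow> 'x1 set \<Rightarrow> ('x1 \<Rightarrow> 'x2) \<Rightarrow> ('v1 \<Rightarrow> 'v2) \<Rightarrow> ('x1 \<Rightarrow> 'v1) set" where
  "inv_sections X1 DX1 V1 DV1 \<pi>1 Y f ft =
     {s \<in> smooth_maps X1 DX1 V1 DV1. (\<forall>x\<in>X1. \<pi>1 (s x) = x) \<and>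
        (\<forall>y\<in>Y. \<forall>y'\<in>Y. f y = f y' \<longrightarrow> ft (s y) = ft (s y'))}"

text \<open>The relations defining X1^f and V1^ft.\<close>

definition relX :: "'x1 set \<Rightarrow> 'x1 set \<Rightarrow> ('x1 \<Rightarrow> 'x2) \<Rightarrow> ('x1 \<times> 'x1) set" where
  "relX X1 Y f = {(x, x'). x \<in> X1 \<and> x' \<in> X1 \<and> (x = x' \<or> (x \<in> Y \<and> x' \<in> Y \<and> f x = f x'))}"

definition relV :: "'v1 set \<Rightarrow> ('v1 \<Rightarrow> 'x1) \<Rightarrow> 'x1 set \<Rightarrow> ('v1 \<Rightarrow> 'v2) \<Rightarrow> ('v1 \<times> 'v1) set" where
  "relV V1 \<pi>1 Y ft = {(v, v'). v \<in> V1 \<and> v' \<in> V1 \<and>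
      (v = v' \<or> (\<pi>1 v \<in> Y \<and> \<pi>1 v' \<in> Y \<and> ft v = ft v'))}"

definition quot_proj :: "('x1 \<times> 'x1) set \<Rightarrow> ('v1 \<Rightarrow> 'x1) \<Rightarrow> 'v1 set \<Rightarrow> 'x1 set" where
  "quot_proj rX \<pi>1 c = rX `` {\<pi>1 (SOME v. v \<in> c)}"

definition S1 :: "'x1 set \<Rightarrow> 'x1 plots \<Rightarrow> 'v1 set \<Rightarrow> 'v1 plots \<Rightarrow> ('v1 \<Rightarrow> 'x1)
    \<Rightarrow> 'x1 set \<Rightarrow> ('x1 \<Rightarrow> 'x2) \<Rightarrow> ('v1 \<Rightarrow> 'v2) \<Rightarrow> ('x1 \<Rightarrow> 'v1) \<Rightarrow> ('x1 set \<Rightarrow> 'v1 set)" where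
  "S1 X1 DX1 V1 DV1 \<pi>1 Y f ft s =
     (THE t. t \<in> smooth_maps (X1 // relX X1 Y f) (quot_plots X1 DX1 (relX X1 Y f))
                             (V1 // relV V1 \<pi>1 Y ft) (quot_plots V1 DV1 (relV V1 \<pi>1 Y ft)) \<and>
        (\<forall>c \<in> X1 // relX X1 Y f. quot_proj (relX X1 Y f) \<pi>1 (t c) = c) \<and>
        (\<forall>x\<in>X1. t (relX X1 Y f `` {x}) = relV V1 \<pi>1 Y ft `` {s x}))"

end

theory Submission
  imports Defs
begin

text \<open>A section s descends to the quotients because invariance makes it respect the gluing
  relations: S1(s) sends the class of x to the class of s x. A plot of X1^f lifts locally to a
  plot of X1, and composing with s gives a local lift of the image plot, so S1(s) is smooth;
  the same local lifting, applied to the evaluation map of a plot of sections, shows that S1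
  carries plots to plots.\<close>

lemma diffeology_plotD:
  assumes "diffeology X P" and "P n U p"
  shows "domain n U" and "p ` U \<subseteq> X"
proof -
  have "\<forall>n U p. P n U p \<longrightarrow> domain n U \<and> p ` U \<subseteq> X"
    using assms(1) unfolding diffeology_def by (elim conjE)
  then show "domain n U" and "p ` U \<subseteq> X"
    using assms(2) by blast+
qed

lemma diffeology_const_plot:
  assumes "diffeology X P" and "domain n U" and "c \<in> X"
  shows "P n U (\<lambda>_. c)"
proof -
  have "\<forall>n U c. domain n U \<and> c \<in> X \<longrightarrow> P n U (\<lambda>_. c)"
    using assms(1) unfolding diffeology_def by (elim conjE)
  then show ?thesis
    using assms(2,3) by blast
qed

lemma quotient_extensional_eqI:
  assumes "t \<in> extensional (X // r)" and "t' \<in> extensional (X // r)"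
    and "\<And>x. x \<in> X \<Longrightarrow> t (r `` {x}) = t' (r `` {x})"
  shows "t = t'"
  using assms(1,2)
proof (rule extensionalityI)
  fix c assume "c \<in> X // r"
  then show "t c = t' c"
    using assms(3) by (auto elim!: quotientE)
qed

text \<open>Taking the union over the class avoids choosing a representative.\<close>

definition quotient_lift :: "'a set \<Rightarrow> ('a \<times> 'a) set \<Rightarrow> ('b \<times> 'b) set \<Rightarrow> ('a \<Rightarrow> 'b)
    \<Rightarrow> 'a set \<Rightarrow> 'b set" where
  "quotient_lift X r R s = (\<lambda>c \<in> X // r. \<Union>x\<in>c. R `` {s x})"

lemma quotient_lift_class:
  assumes "equiv X r" and "equiv V R" and "\<And>x x'. (x, x') \<in> r \<Longrightarrow> (s x, s x') \<in> R"
    and "x \<in> X"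
  shows "quotient_lift X r R s (r `` {x}) = R `` {s x}"
proof -
  have "(\<lambda>x. R `` {s x}) respects r"
    by (intro congruentI equiv_class_eq[OF assms(2)] assms(3))
  then show ?thesis
    using assms(1,4) by (simp add: quotient_lift_def quotientI UN_equiv_class)
qed

lemma quotient_lift_in_quotient:
  assumes "equiv X r" and "equiv V R" and "smooth X P V Q s"
    and "\<And>x x'. (x, x') \<in> r \<Longrightarrow> (s x, s x') \<in> R" and "c \<in> X // r"
  shows "quotient_lift X r R s c \<in> V // R"
  using assms(5)
proof (rule quotientE)
  fix x assume "x \<in> X" and "c = r `` {x}"
  moreover have "s x \<in> V"
    using assms(3) \<open>x \<in> X\<close> unfolding smooth_def by blast
  ultimately show ?thesis
    using quotient_lift_class[OF assms(1,2,4)] by (simp add: quotientI)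
qed

lemma quotient_lift_smooth_maps:
  assumes dX: "diffeology X P" and eX: "equiv X r" and eV: "equiv V R"
    and s: "smooth X P V Q s" and resp: "\<And>x x'. (x, x') \<in> r \<Longrightarrow> (s x, s x') \<in> R"
  shows "quotient_lift X r R s \<in> smooth_maps (X // r) (quot_plots X P r) (V // R) (quot_plots V Q R)"
proof -
  let ?t = "quotient_lift X r R s"
  have lift_class: "?t (r `` {x}) = R `` {s x}" if "x \<in> X" for x
    using quotient_lift_class[OF eX eV resp that] .
  have into: "?t c \<in> V // R" if "c \<in> X // r" for c
    using eX eV s resp that by (rule quotient_lift_in_quotient)
  have "quot_plots V Q R n U (?t \<circ> p)" if p: "quot_plots X P r n U p" for n U p
    unfolding quot_plots_def
  proof (intro conjI ballI)
    show "domain n U" and "(?t \<circ> p) ` U \<subseteq> V // R"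
      using p into unfolding quot_plots_def by auto
    fix u assume "u \<in> U"
    then obtain W q where W: "u \<in> W" "W \<subseteq> U" "domain n W" "P n W q"
      and pq: "\<forall>w\<in>W. p w = r `` {q w}"
      using p unfolding quot_plots_def by blast
    have "\<forall>w\<in>W. (?t \<circ> p) w = R `` {(s \<circ> q) w}"
    proof
      fix w assume "w \<in> W"
      moreover have "q ` W \<subseteq> X"
        using dX W(4) by (rule diffeology_plotD(2))
      ultimately show "(?t \<circ> p) w = R `` {(s \<circ> q) w}"
        using pq lift_class by auto
    qed
    moreover have "Q n W (s \<circ> q)"
      using s W(4) unfolding smooth_def by blast
    ultimately show "\<exists>W q. u \<in> W \<and> W \<subseteq> U \<and> domain n W \<and> Q n W q \<and>
        (\<forall>w\<in>W. (?t \<circ> p) w = R `` {q w})"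
      using W(1-3) by (intro exI[of _ W] exI[of _ "s \<circ> q"]) blast
  qed
  moreover have "?t \<in> extensional (X // r)"
    unfolding quotient_lift_def by simp
  ultimately show ?thesis
    using into unfolding smooth_maps_def smooth_def by blast
qed

lemma fun_plots_evaluation:
  assumes "fun_plots X P V Q n U q" and "P m U' p"
  shows "Q (n + m) (prod_dom n U m U') (\<lambda>z. q (pr1 n z) (p (pr2 n z)))"
proof -
  have "\<forall>m U' p. P m U' p \<longrightarrow> Q (n + m) (prod_dom n U m U') (\<lambda>z. q (pr1 n z) (p (pr2 n z)))"
    using assms(1) unfolding fun_plots_def by (elim conjE)
  then show ?thesis
    using assms(2) by blast
qed

lemma fun_plots_prod_dom_domain:
  assumes "diffeology X P" and "diffeology V Q" and "fun_plots X P V Q n U q"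
    and "domain m U'" and "X = {} \<Longrightarrow> U' = {}"
  shows "domain (n + m) (prod_dom n U m U')"
proof (cases "X = {}")
  case True
  then have "prod_dom n U m U' = {}"
    using assms(5) unfolding prod_dom_def by simp
  then show ?thesis
    unfolding domain_def by simp
next
  case False
  then obtain c where "c \<in> X" by blast
  show ?thesis
    using assms(2) fun_plots_evaluation[OF assms(3) diffeology_const_plot[OF assms(1,4) \<open>c \<in> X\<close>]]
    by (rule diffeology_plotD(1))
qed

lemma fun_plots_quotient:
  assumes dX: "diffeology X P" and dV: "diffeology V Q"
    and into: "\<And>s. s \<in> A \<Longrightarrow> \<Phi> s \<in> smooth_maps (X // r) (quot_plots X P r) (V // R) (quot_plots V Q R)"
    and on_classes: "\<And>s x. s \<in> A \<Longrightarrow> x \<in> X \<Longrightarrow> \<Phi> s (r `` {x}) = R `` {s x}"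
    and q: "fun_plots X P V Q n U q" and qA: "q ` U \<subseteq> A"
  shows "fun_plots (X // r) (quot_plots X P r) (V // R) (quot_plots V Q R) n U (\<Phi> \<circ> q)"
  unfolding fun_plots_def
proof (intro conjI allI impI)
  show "domain n U"
    using q unfolding fun_plots_def by blast
  show image: "(\<Phi> \<circ> q) ` U \<subseteq> smooth_maps (X // r) (quot_plots X P r) (V // R) (quot_plots V Q R)"
    using qA into by auto
  fix m U' p assume p: "quot_plots X P r m U' p"
  let ?D = "prod_dom n U m U'" and ?e = "\<lambda>z. (\<Phi> \<circ> q) (pr1 n z) (p (pr2 n z))"
  have U': "domain m U'" and pU: "p ` U' \<subseteq> X // r"
    using p unfolding quot_plots_def by blast+
  show "quot_plots V Q R (n + m) ?D ?e"
    unfolding quot_plots_def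
  proof (intro conjI ballI)
    have "U' = {}" if "X = {}"
      using pU that unfolding quotient_def by auto
    with dX dV q U' show "domain (n + m) ?D"
      by (rule fun_plots_prod_dom_domain)
    have "\<Phi> (q u) ` (X // r) \<subseteq> V // R" if "u \<in> U" for u
      using into[of "q u"] qA that unfolding smooth_maps_def smooth_def by blast
    then show "?e ` ?D \<subseteq> V // R"
      using pU unfolding prod_dom_def image_subset_iff comp_apply by auto
    fix z assume z: "z \<in> ?D"
    then obtain W p' where W: "pr2 n z \<in> W" "W \<subseteq> U'" "domain m W" "P m W p'"
      and pp': "\<forall>w\<in>W. p w = r `` {p' w}"
      using p unfolding quot_plots_def prod_dom_def by blast
    let ?W = "prod_dom n U m W"
    have "z \<in> ?W" and "?W \<subseteq> ?D"
      using z W(1,2) unfolding prod_dom_def by auto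
    moreover have lift: "Q (n + m) ?W (\<lambda>z. q (pr1 n z) (p' (pr2 n z)))"
      by (fact fun_plots_evaluation[OF q W(4)])
    moreover have "domain (n + m) ?W"
      using dV lift by (rule diffeology_plotD(1))
    moreover have "\<forall>w\<in>?W. ?e w = R `` {q (pr1 n w) (p' (pr2 n w))}"
    proof
      fix w assume "w \<in> ?W"
      then have "q (pr1 n w) \<in> A" and "pr2 n w \<in> W"
        using qA unfolding prod_dom_def by auto
      moreover have "p' (pr2 n w) \<in> X"
        using diffeology_plotD(2)[OF dX W(4)] \<open>pr2 n w \<in> W\<close> by blast
      ultimately show "?e w = R `` {q (pr1 n w) (p' (pr2 n w))}"
        using pp' on_classes by simp
    qed
    ultimately show "\<exists>W' q'. z \<in> W' \<and> W' \<subseteq> ?D \<and> domain (n + m) W' \<and> Q (n + m) W' q' \<and>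
        (\<forall>w\<in>W'. ?e w = R `` {q' w})"
      by (intro exI[of _ ?W] exI[of _ "\<lambda>z. q (pr1 n z) (p' (pr2 n z))"]) blast
  qed
qed

lemma smooth_fun_plots_quotient:
  assumes "diffeology X P" and "diffeology V Q"
    and "\<And>s. s \<in> A \<Longrightarrow> \<Phi> s \<in> smooth_maps (X // r) (quot_plots X P r) (V // R) (quot_plots V Q R)"
    and "\<And>s x. s \<in> A \<Longrightarrow> x \<in> X \<Longrightarrow> \<Phi> s (r `` {x}) = R `` {s x}"
  shows "smooth A (sub_plots (fun_plots X P V Q) A)
           (smooth_maps (X // r) (quot_plots X P r) (V // R) (quot_plots V Q R))
           (fun_plots (X // r) (quot_plots X P r) (V // R) (quot_plots V Q R)) \<Phi>"
  unfolding smooth_def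
proof (intro conjI allI impI)
  show "\<Phi> ` A \<subseteq> smooth_maps (X // r) (quot_plots X P r) (V // R) (quot_plots V Q R)"
    using assms(3) by blast
  fix n U q assume "sub_plots (fun_plots X P V Q) A n U q"
  then have q: "fun_plots X P V Q n U q" and qA: "q ` U \<subseteq> A"
    unfolding sub_plots_def by blast+
  show "fun_plots (X // r) (quot_plots X P r) (V // R) (quot_plots V Q R) n U (\<Phi> \<circ> q)"
    by (rule fun_plots_quotient[OF _ _ _ _ q qA]) (fact assms)+
qed

lemma equiv_relX: "equiv X1 (relX X1 Y f)"
proof (rule equivI)
  show "refl_on X1 (relX X1 Y f)" unfolding refl_on_def relX_def by blast
  show "relX X1 Y f \<subseteq> X1 \<times> X1" unfolding relX_def by auto
  show "sym (relX X1 Y f)" unfolding sym_def relX_def by auto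
  show "trans (relX X1 Y f)" unfolding trans_def relX_def by fastforce
qed

lemma equiv_relV: "equiv V1 (relV V1 \<pi>1 Y ft)"
proof (rule equivI)
  show "refl_on V1 (relV V1 \<pi>1 Y ft)" unfolding refl_on_def relV_def by blast
  show "relV V1 \<pi>1 Y ft \<subseteq> V1 \<times> V1" unfolding relV_def by auto
  show "sym (relV V1 \<pi>1 Y ft)" unfolding sym_def relV_def by auto
  show "trans (relV V1 \<pi>1 Y ft)" unfolding trans_def relV_def by fastforce
qed

lemma inv_section_respects:
  assumes "s \<in> inv_sections X1 DX1 V1 DV1 \<pi>1 Y f ft" and "(x, x') \<in> relX X1 Y f"
  shows "(s x, s x') \<in> relV V1 \<pi>1 Y ft"
proof -
  have "s ` X1 \<subseteq> V1" and "\<forall>x\<in>X1. \<pi>1 (s x) = x"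
    and "\<forall>y\<in>Y. \<forall>y'\<in>Y. f y = f y' \<longrightarrow> ft (s y) = ft (s y')"
    using assms(1) unfolding inv_sections_def smooth_maps_def smooth_def by blast+
  then show ?thesis
    using assms(2) unfolding relX_def relV_def by auto
qed

lemma relV_imp_relX:
  assumes "\<pi>1 ` V1 \<subseteq> X1" and "\<forall>v \<in> V1 \<inter> \<pi>1 -` Y. \<pi>2 (ft v) = f (\<pi>1 v)"
    and "(v, v') \<in> relV V1 \<pi>1 Y ft"
  shows "(\<pi>1 v, \<pi>1 v') \<in> relX X1 Y f"
proof -
  have "v \<in> V1" "v' \<in> V1" and "v = v' \<or> (\<pi>1 v \<in> Y \<and> \<pi>1 v' \<in> Y \<and> ft v = ft v')"
    using assms(3) unfolding relV_def by auto
  moreover have "f (\<pi>1 v) = f (\<pi>1 v')" if "\<pi>1 v \<in> Y" "\<pi>1 v' \<in> Y" "ft v = ft v'"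
  proof -
    have "f (\<pi>1 v) = \<pi>2 (ft v)" using assms(2) \<open>v \<in> V1\<close> that(1) by simp
    also have "\<dots> = \<pi>2 (ft v')" using that(3) by simp
    also have "\<dots> = f (\<pi>1 v')" using assms(2) \<open>v' \<in> V1\<close> that(2) by simp
    finally show ?thesis .
  qed
  ultimately show ?thesis
    using assms(1) unfolding relX_def by auto
qed

lemma quot_proj_class:
  assumes "\<pi>1 ` V1 \<subseteq> X1" and "\<forall>v \<in> V1 \<inter> \<pi>1 -` Y. \<pi>2 (ft v) = f (\<pi>1 v)" and "v \<in> V1"
  shows "quot_proj (relX X1 Y f) \<pi>1 (relV V1 \<pi>1 Y ft `` {v}) = relX X1 Y f `` {\<pi>1 v}"
proof -
  let ?v' = "SOME v'. v' \<in> relV V1 \<pi>1 Y ft `` {v}"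
  have "v \<in> relV V1 \<pi>1 Y ft `` {v}"
    using equiv_relV assms(3) by (rule equiv_class_self)
  then have "?v' \<in> relV V1 \<pi>1 Y ft `` {v}"
    by (rule someI)
  then have "(\<pi>1 v, \<pi>1 ?v') \<in> relX X1 Y f"
    using assms(1,2) by (intro relV_imp_relX) simp_all
  then have "relX X1 Y f `` {\<pi>1 v} = relX X1 Y f `` {\<pi>1 ?v'}"
    using equiv_relX by (intro equiv_class_eq)
  then show ?thesis
    unfolding quot_proj_def by simp
qed

lemma quot_proj_quotient_lift:
  assumes "\<pi>1 ` V1 \<subseteq> X1" and "\<forall>v \<in> V1 \<inter> \<pi>1 -` Y. \<pi>2 (ft v) = f (\<pi>1 v)"
    and s: "s \<in> inv_sections X1 DX1 V1 DV1 \<pi>1 Y f ft" and "c \<in> X1 // relX X1 Y f"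
  shows "quot_proj (relX X1 Y f) \<pi>1 (quotient_lift X1 (relX X1 Y f) (relV V1 \<pi>1 Y ft) s c) = c"
  using assms(4)
proof (rule quotientE)
  fix x assume x: "x \<in> X1" and c: "c = relX X1 Y f `` {x}"
  have "s x \<in> V1" and "\<pi>1 (s x) = x"
    using s x unfolding inv_sections_def smooth_maps_def smooth_def by auto
  moreover have "quotient_lift X1 (relX X1 Y f) (relV V1 \<pi>1 Y ft) s c = relV V1 \<pi>1 Y ft `` {s x}"
    unfolding c using equiv_relX equiv_relV inv_section_respects[OF s] x
    by (rule quotient_lift_class)
  moreover have "quot_proj (relX X1 Y f) \<pi>1 (relV V1 \<pi>1 Y ft `` {s x}) = relX X1 Y f `` {\<pi>1 (s x)}"
    using assms(1,2) \<open>s x \<in> V1\<close> by (rule quot_proj_class)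
  ultimately show ?thesis
    using c by simp
qed

lemma S1_eq_quotient_lift:
  assumes pb1: "pseudo_bundle V1 DV1 X1 DX1 \<pi>1 add1 smult1 zero1"
    and gl: "gluing X1 DX1 V1 DV1 \<pi>1 add1 smult1 X2 DX2 V2 DV2 \<pi>2 add2 smult2 Y f ft"
    and s: "s \<in> inv_sections X1 DX1 V1 DV1 \<pi>1 Y f ft"
  shows "S1 X1 DX1 V1 DV1 \<pi>1 Y f ft s = quotient_lift X1 (relX X1 Y f) (relV V1 \<pi>1 Y ft) s"
  unfolding S1_def
proof (rule the_equality)
  let ?rX = "relX X1 Y f" and ?rV = "relV V1 \<pi>1 Y ft"
  let ?t = "quotient_lift X1 ?rX ?rV s"
  have dX: "diffeology X1 DX1" and piV: "\<pi>1 ` V1 \<subseteq> X1"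
    using pb1 unfolding pseudo_bundle_def by auto
  have glue: "\<forall>v \<in> V1 \<inter> \<pi>1 -` Y. \<pi>2 (ft v) = f (\<pi>1 v)"
    using gl unfolding gluing_def by blast
  have s_smooth: "smooth X1 DX1 V1 DV1 s"
    using s unfolding inv_sections_def smooth_maps_def by blast
  have resp: "(s x, s x') \<in> ?rV" if "(x, x') \<in> ?rX" for x x'
    using s that by (rule inv_section_respects)
  have on_classes: "?t (?rX `` {x}) = ?rV `` {s x}" if "x \<in> X1" for x
    using equiv_relX equiv_relV resp that by (rule quotient_lift_class)
  have "?t \<in> smooth_maps (X1 // ?rX) (quot_plots X1 DX1 ?rX) (V1 // ?rV) (quot_plots V1 DV1 ?rV)"
    using dX equiv_relX equiv_relV s_smooth resp by (rule quotient_lift_smooth_maps)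
  moreover have "\<forall>c \<in> X1 // ?rX. quot_proj ?rX \<pi>1 (?t c) = c"
  proof
    fix c assume "c \<in> X1 // ?rX"
    with piV glue s show "quot_proj ?rX \<pi>1 (?t c) = c"
      by (rule quot_proj_quotient_lift)
  qed
  ultimately show "?t \<in> smooth_maps (X1 // ?rX) (quot_plots X1 DX1 ?rX) (V1 // ?rV) (quot_plots V1 DV1 ?rV) \<and>
      (\<forall>c \<in> X1 // ?rX. quot_proj ?rX \<pi>1 (?t c) = c) \<and> (\<forall>x\<in>X1. ?t (?rX `` {x}) = ?rV `` {s x})"
    using on_classes by blast
  fix t assume "t \<in> smooth_maps (X1 // ?rX) (quot_plots X1 DX1 ?rX) (V1 // ?rV) (quot_plots V1 DV1 ?rV) \<and>
      (\<forall>c \<in> X1 // ?rX. quot_proj ?rX \<pi>1 (t c) = c) \<and> (\<forall>x\<in>X1. t (?rX `` {x}) = ?rV `` {s x})"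
  then have "t \<in> extensional (X1 // ?rX)" and "\<forall>x\<in>X1. t (?rX `` {x}) = ?rV `` {s x}"
    unfolding smooth_maps_def by auto
  moreover have "?t \<in> extensional (X1 // ?rX)"
    unfolding quotient_lift_def by simp
  ultimately show "t = ?t"
    using on_classes by (intro quotient_extensional_eqI) auto
qed

theorem theorem2p15:
  fixes X1 :: "'x1 set" and DX1 :: "'x1 plots" and V1 :: "'v1 set" and DV1 :: "'v1 plots"
    and \<pi>1 :: "'v1 \<Rightarrow> 'x1" and add1 :: "'v1 \<Rightarrow> 'v1 \<Rightarrow> 'v1" and smult1 :: "real \<Rightarrow> 'v1 \<Rightarrow> 'v1"
    and zero1 :: "'x1 \<Rightarrow> 'v1"
    and X2 :: "'x2 set" and DX2 :: "'x2 plots" and V2 :: "'v2 set" and DV2 :: "'v2 plots"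
    and \<pi>2 :: "'v2 \<Rightarrow> 'x2" and add2 :: "'v2 \<Rightarrow> 'v2 \<Rightarrow> 'v2" and smult2 :: "real \<Rightarrow> 'v2 \<Rightarrow> 'v2"
    and zero2 :: "'x2 \<Rightarrow> 'v2"
    and Y :: "'x1 set" and f :: "'x1 \<Rightarrow> 'x2" and ft :: "'v1 \<Rightarrow> 'v2"
  assumes "pseudo_bundle V1 DV1 X1 DX1 \<pi>1 add1 smult1 zero1"
    and "pseudo_bundle V2 DV2 X2 DX2 \<pi>2 add2 smult2 zero2"
    and "gluing X1 DX1 V1 DV1 \<pi>1 add1 smult1 X2 DX2 V2 DV2 \<pi>2 add2 smult2 Y f ft"
  shows "smooth (inv_sections X1 DX1 V1 DV1 \<pi>1 Y f ft)
                (sub_plots (fun_plots X1 DX1 V1 DV1) (inv_sections X1 DX1 V1 DV1 \<pi>1 Y f ft))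
                (smooth_maps (X1 // relX X1 Y f) (quot_plots X1 DX1 (relX X1 Y f))
                             (V1 // relV V1 \<pi>1 Y ft) (quot_plots V1 DV1 (relV V1 \<pi>1 Y ft)))
                (fun_plots (X1 // relX X1 Y f) (quot_plots X1 DX1 (relX X1 Y f))
                           (V1 // relV V1 \<pi>1 Y ft) (quot_plots V1 DV1 (relV V1 \<pi>1 Y ft)))
                (S1 X1 DX1 V1 DV1 \<pi>1 Y f ft)"
proof (rule smooth_fun_plots_quotient)
  show dX: "diffeology X1 DX1" and "diffeology V1 DV1"
    using assms(1) unfolding pseudo_bundle_def by auto
  fix s assume s: "s \<in> inv_sections X1 DX1 V1 DV1 \<pi>1 Y f ft"
  have smooth_s: "smooth X1 DX1 V1 DV1 s"
    using s unfolding inv_sections_def smooth_maps_def by blast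
  note S1_s = S1_eq_quotient_lift[OF assms(1,3) s]
  show "S1 X1 DX1 V1 DV1 \<pi>1 Y f ft s \<in> smooth_maps (X1 // relX X1 Y f) (quot_plots X1 DX1 (relX X1 Y f))
      (V1 // relV V1 \<pi>1 Y ft) (quot_plots V1 DV1 (relV V1 \<pi>1 Y ft))"
    unfolding S1_s using dX equiv_relX equiv_relV smooth_s inv_section_respects[OF s]
    by (rule quotient_lift_smooth_maps)
  show "S1 X1 DX1 V1 DV1 \<pi>1 Y f ft s (relX X1 Y f `` {x}) = relV V1 \<pi>1 Y ft `` {s x}"
    if "x \<in> X1" for x
    unfolding S1_s using equiv_relX equiv_relV inv_section_respects[OF s] that
    by (rule quotient_lift_class)
qed

end
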